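(* For every $k\ge1$, $|G_k|=|B_k|/2$.
   Context: Let $C_2=\{e,\sigma\}$ with $\sigma=(1,2)$. Define $B_1=C_2$ and $B_k=B_{k-1}\wr C_2$ for $k>1$, with elements written as wreath recursions $(g_1,g_2)\pi$, $g_1,g_2\in B_{k-1}$, $\pi\in C_2$, and multiplication $(g_1,g_2)\pi\cdot(h_1,h_2)\rho=(g_1h_{\pi(1)},g_2h_{\pi(2)})\pi\rho$. Define $G_1=\{e\}$ and, for $k>1$, $G_k=\{(g_1,g_2)\pi\in B_k : g_1g_2\in G_{k-1}\}$. *)

theory Defs
  imports Main
begin

text \<open>A permutation in C_2 = {e, sigma}
  is encoded by a bool (False = e, True = sigma).  An element (g1,g2)pi of
  B_k = B_{k-1} wr C_2 is encoded as Node g1 g2 pi.  We use the trivial group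
  B_0 = {Leaf}, so that B_1 = B_0 wr C_2 = {Node Leaf Leaf pi} is a copy of C_2.\<close>

datatype wr = Leaf | Node wr wr bool

fun B :: "nat \<Rightarrow> wr set" where
  "B 0 = {Leaf}"
| "B (Suc k) = {Node g1 g2 p | g1 g2 p. g1 \<in> B k \<and> g2 \<in> B k}"

text \<open>Multiplication (g1,g2)pi * (h1,h2)rho = (g1 h_{pi(1)}, g2 h_{pi(2)}) pi rho.\<close>
fun wmult :: "wr \<Rightarrow> wr \<Rightarrow> wr" where
  "wmult (Node g1 g2 p) (Node h1 h2 q) =
     Node (wmult g1 (if p then h2 else h1)) (wmult g2 (if p then h1 else h2)) (p \<noteq> q)"
| "wmult _ _ = Leaf"

fun ident :: "nat \<Rightarrow> wr" where
  "ident 0 = Leaf"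
| "ident (Suc k) = Node (ident k) (ident k) False"

fun G :: "nat \<Rightarrow> wr set" where
  "G 0 = {Leaf}"
| "G (Suc 0) = {ident 1}"
| "G (Suc (Suc k)) = {x \<in> B (Suc (Suc k)).
      (case x of Node g1 g2 p \<Rightarrow> wmult g1 g2 \<in> G (Suc k) | Leaf \<Rightarrow> False)}"

end

theory Submission
  imports Defs
begin

text \<open>Left multiplication by a fixed element permutes \<open>B\<^sub>k\<close>. An element
  \<open>(g\<^sub>1,g\<^sub>2)\<pi>\<close> of \<open>B\<^sub>k\<^sub>+\<^sub>1\<close> lies in \<open>G\<^sub>k\<^sub>+\<^sub>1\<close> iff \<open>g\<^sub>1g\<^sub>2 \<in> G\<^sub>k\<close>, so for each of the
  \<open>2|B\<^sub>k|\<close> choices of \<open>(g\<^sub>1,\<pi>)\<close> there are exactly \<open>|G\<^sub>k|\<close> admissible \<open>g\<^sub>2\<close>. Hence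
  \<open>|G\<^sub>k\<^sub>+\<^sub>1| = 2|B\<^sub>k||G\<^sub>k|\<close>, while \<open>|B\<^sub>k\<^sub>+\<^sub>1| = 2|B\<^sub>k|\<^sup>2\<close>, and the ratio 2 propagates
  by induction from \<open>|B\<^sub>1| = 2\<close>, \<open>|G\<^sub>1| = 1\<close>.\<close>

lemma B_Suc_eq_image: "B (Suc n) = (\<lambda>(g1, g2, p). Node g1 g2 p) ` (B n \<times> B n \<times> UNIV)"
  by (auto simp: image_iff)

lemma finite_B: "finite (B n)"
  by (induction n) (simp_all add: B_Suc_eq_image del: B.simps(2))

lemma card_B_Suc: "card (B (Suc n)) = 2 * card (B n) * card (B n)"
proof -
  have "inj_on (\<lambda>(g1, g2, p). Node g1 g2 p) (B n \<times> B n \<times> (UNIV :: bool set))"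
    by (auto simp: inj_on_def)
  then have "card (B (Suc n)) = card (B n \<times> B n \<times> (UNIV :: bool set))"
    unfolding B_Suc_eq_image by (rule card_image)
  then show ?thesis
    by (simp add: card_cartesian_product)
qed

lemma wmult_in_B: "g \<in> B n \<Longrightarrow> h \<in> B n \<Longrightarrow> wmult g h \<in> B n"
  by (induction n arbitrary: g h) auto

lemma wmult_left_cancel:
  "g \<in> B n \<Longrightarrow> h \<in> B n \<Longrightarrow> h' \<in> B n \<Longrightarrow> wmult g h = wmult g h' \<Longrightarrow> h = h'"
proof (induction n arbitrary: g h h')
  case 0
  then show ?case by simp
next
  case (Suc n)
  then obtain g1 g2 p h1 h2 q h1' h2' q' where
    nodes: "g = Node g1 g2 p" "h = Node h1 h2 q" "h' = Node h1' h2' q'" and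
    in_B: "g1 \<in> B n" "g2 \<in> B n" "h1 \<in> B n" "h2 \<in> B n" "h1' \<in> B n" "h2' \<in> B n"
    by auto
  with Suc.prems(4) Suc.IH show ?case
    by (cases p) auto
qed

lemma bij_betw_wmult_left: "g \<in> B n \<Longrightarrow> bij_betw (wmult g) (B n) (B n)"
proof -
  assume g: "g \<in> B n"
  have inj: "inj_on (wmult g) (B n)"
    using wmult_left_cancel[OF g] by (auto simp: inj_on_def)
  moreover have "wmult g ` B n = B n"
    using wmult_in_B[OF g] card_image[OF inj] finite_B card_subset_eq
    by (metis image_subsetI)
  ultimately show ?thesis
    by (simp add: bij_betw_def)
qed

lemma card_wmult_left_preimage:
  assumes "g \<in> B n" and "S \<subseteq> B n"
  shows "card {h \<in> B n. wmult g h \<in> S} = card S"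
proof -
  have bij: "bij_betw (wmult g) (B n) (B n)"
    using assms(1) by (rule bij_betw_wmult_left)
  then have "wmult g ` {h \<in> B n. wmult g h \<in> S} = S"
    using assms(2) by (auto simp: bij_betw_def simp del: B.simps)
  moreover have "inj_on (wmult g) {h \<in> B n. wmult g h \<in> S}"
    using bij by (auto simp: bij_betw_def inj_on_def)
  ultimately show ?thesis
    by (metis card_image)
qed

lemma G_subset_B: "G n \<subseteq> B n"
  by (cases n rule: G.cases) auto

lemma card_G_Suc_Suc: "card (G (Suc (Suc k))) = 2 * card (B (Suc k)) * card (G (Suc k))"
proof -
  let ?n = "Suc k"
  let ?admissible = "\<lambda>g1. {g2 \<in> B ?n. wmult g1 g2 \<in> G ?n}"
  let ?S = "Sigma (B ?n) ?admissible \<times> (UNIV :: bool set)"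
  have "G (Suc ?n) = (\<lambda>((g1, g2), p). Node g1 g2 p) ` ?S"
    by (auto simp: image_iff)
  moreover have "inj_on (\<lambda>((g1, g2), p). Node g1 g2 p) ?S"
    by (auto simp: inj_on_def)
  ultimately have "card (G (Suc ?n)) = card (Sigma (B ?n) ?admissible) * 2"
    by (simp add: card_image card_cartesian_product)
  also have "card (Sigma (B ?n) ?admissible) = (\<Sum>g1\<in>B ?n. card (?admissible g1))"
    by (rule card_SigmaI) (simp_all add: finite_B del: B.simps)
  also have "\<dots> = (\<Sum>g1\<in>B ?n. card (G ?n))"
    by (rule sum.cong) (simp_all add: card_wmult_left_preimage G_subset_B del: B.simps)
  finally show ?thesis
    by simp
qed

theorem mainTheorem11:
  fixes k :: nat
  assumes "k \<ge> 1"
  shows "2 * card (G k) = card (B k)"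
  using assms
proof (induction k rule: nat_induct_at_least)
  case base
  have "B 1 = {Node Leaf Leaf False, Node Leaf Leaf True}"
    by auto
  then show ?case
    by simp
next
  case (Suc m)
  then obtain j where "m = Suc j"
    by (cases m) auto
  with Suc.IH show ?case
    by (simp only: card_G_Suc_Suc card_B_Suc) simp
qed

end
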